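(* Let $R_1,R_2$ be commutative rings with nonzero identity, $I_1$ a proper ideal of $R_1$, $I_2$ a proper ideal of $R_2$, $R=R_1\times R_2$ and $I=I_1\times I_2$. If $\Gamma''_{I_1}(R_1)$ or $\Gamma''_{I_2}(R_2)$ is not planar, then $\Gamma''_I(R)$ is not planar.
   Context: $R_1\times R_2$ has componentwise operations. For a commutative ring $S$ and an ideal $J$ of $S$, $\Gamma''_J(S)$ is the simple undirected graph whose vertex set is $\{x\in S\setminus J : xS+J\neq S\}$, with distinct vertices $x,y$ adjacent if and only if $x\notin yS+J$ and $y\notin xS+J$. A graph is planar if it can be drawn in the plane with edges meeting only at their endpoints. *)

theory Defs
  imports "HOL-Analysis.Analysis" "HOL-Algebra.Chinese_Remainder"
begin

definition coset_ideal :: "('a, 'm) ring_scheme \<Rightarrow> 'a set \<Rightarrow> 'a \<Rightarrow> 'a set" where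
  "coset_ideal S J x = {x \<otimes>\<^bsub>S\<^esub> s \<oplus>\<^bsub>S\<^esub> j | s j. s \<in> carrier S \<and> j \<in> J}"

definition gamma2_verts :: "('a, 'm) ring_scheme \<Rightarrow> 'a set \<Rightarrow> 'a set" where
  "gamma2_verts S J = {x \<in> carrier S - J. coset_ideal S J x \<noteq> carrier S}"

definition gamma2_adj :: "('a, 'm) ring_scheme \<Rightarrow> 'a set \<Rightarrow> 'a \<Rightarrow> 'a \<Rightarrow> bool" where
  "gamma2_adj S J x y \<longleftrightarrow> x \<in> gamma2_verts S J \<and> y \<in> gamma2_verts S J \<and> x \<noteq> y \<and>
     x \<notin> coset_ideal S J y \<and> y \<notin> coset_ideal S J x"

definition planar :: "'a set \<Rightarrow> ('a \<Rightarrow> 'a \<Rightarrow> bool) \<Rightarrow> bool" where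
  "planar V E \<longleftrightarrow> (\<exists>(f :: 'a \<Rightarrow> complex) (g :: 'a set \<Rightarrow> real \<Rightarrow> complex).
     inj_on f V \<and>
     (\<forall>u\<in>V. \<forall>v\<in>V. E u v \<longrightarrow>
        arc (g {u, v}) \<and> {pathstart (g {u, v}), pathfinish (g {u, v})} = {f u, f v} \<and>
        path_image (g {u, v}) \<inter> f ` V \<subseteq> {f u, f v}) \<and>
     (\<forall>u\<in>V. \<forall>v\<in>V. \<forall>u'\<in>V. \<forall>v'\<in>V. E u v \<longrightarrow> E u' v' \<longrightarrow> {u, v} \<noteq> {u', v'} \<longrightarrow>
        path_image (g {u, v}) \<inter> path_image (g {u', v'}) \<subseteq> f ` ({u, v} \<inter> {u', v'})))"

end

theory Submission
  imports Defs
begin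

text \<open>Since \<open>(x, y)R + I = (xR\<^sub>1 + I\<^sub>1) \<times> (yR\<^sub>2 + I\<^sub>2)\<close>, the map \<open>x \<mapsto> (x, 0)\<close>
  embeds \<open>\<Gamma>''\<^bsub>I\<^sub>1\<^esub>(R\<^sub>1)\<close> as a subgraph of \<open>\<Gamma>''\<^bsub>I\<^esub>(R)\<close>: as \<open>0 \<in> I\<^sub>2\<close>, the second
  coordinate does not affect adjacency, and as \<open>I\<^sub>2\<close> is proper, \<open>(x, 0)R + I \<noteq> R\<close>.
  Swapping the coordinates identifies \<open>\<Gamma>''\<^bsub>I\<^sub>1 \<times> I\<^sub>2\<^esub>(R\<^sub>1 \<times> R\<^sub>2)\<close> with
  \<open>\<Gamma>''\<^bsub>I\<^sub>2 \<times> I\<^sub>1\<^esub>(R\<^sub>2 \<times> R\<^sub>1)\<close>, which handles the second factor, and a subgraph of a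
  planar graph is planar.\<close>

lemma planar_subgraph_embedding:
  assumes "planar V E" and "inj_on h V'" and "h ` V' \<subseteq> V"
    and "\<And>u v. u \<in> V' \<Longrightarrow> v \<in> V' \<Longrightarrow> E' u v \<Longrightarrow> E (h u) (h v)"
  shows "planar V' E'"
proof -
  obtain f :: "'a \<Rightarrow> complex" and g :: "'a set \<Rightarrow> real \<Rightarrow> complex"
    where f: "inj_on f V"
      and arcs: "\<forall>u\<in>V. \<forall>v\<in>V. E u v \<longrightarrow>
        arc (g {u, v}) \<and> {pathstart (g {u, v}), pathfinish (g {u, v})} = {f u, f v} \<and>
        path_image (g {u, v}) \<inter> f ` V \<subseteq> {f u, f v}"
      and crossings: "\<forall>u\<in>V. \<forall>v\<in>V. \<forall>u'\<in>V. \<forall>v'\<in>V. E u v \<longrightarrow> E u' v' \<longrightarrow> {u, v} \<noteq> {u', v'} \<longrightarrow>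
        path_image (g {u, v}) \<inter> path_image (g {u', v'}) \<subseteq> f ` ({u, v} \<inter> {u', v'})"
    using assms(1) unfolding planar_def by (elim exE conjE) blast
  have image_pair: "h ` {u, v} = {h u, h v}" for u v
    by simp
  have image_pair_Int: "h ` ({u, v} \<inter> {u', v'}) = {h u, h v} \<inter> {h u', h v'}"
    if "u \<in> V'" "v \<in> V'" "u' \<in> V'" "v' \<in> V'" for u v u' v'
    using inj_on_image_Int[OF assms(2)] that by (metis empty_subsetI insert_subset image_pair)
  have image_pair_neq: "{h u, h v} \<noteq> {h u', h v'}"
    if "u \<in> V'" "v \<in> V'" "u' \<in> V'" "v' \<in> V'" "{u, v} \<noteq> {u', v'}" for u v u' v'
    using that assms(2) by (metis doubleton_eq_iff inj_on_eq_iff)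
  have "f ` h ` V' \<subseteq> f ` V"
    using assms(3) by blast
  then show ?thesis
    unfolding planar_def
  proof (intro exI[of _ "f \<circ> h"] exI[of _ "\<lambda>S. g (h ` S)"] conjI; (intro ballI impI)?)
    show "inj_on (f \<circ> h) V'"
      using f assms(2,3) by (simp add: comp_inj_on inj_on_subset)
  next
    fix u v
    assume "u \<in> V'" "v \<in> V'" "E' u v"
    then have "E (h u) (h v)" "h u \<in> V" "h v \<in> V"
      using assms(3,4) by auto
    with arcs \<open>f ` h ` V' \<subseteq> f ` V\<close> show "arc (g (h ` {u, v})) \<and>
        {pathstart (g (h ` {u, v})), pathfinish (g (h ` {u, v}))} = {(f \<circ> h) u, (f \<circ> h) v} \<and>
        path_image (g (h ` {u, v})) \<inter> (f \<circ> h) ` V' \<subseteq> {(f \<circ> h) u, (f \<circ> h) v}"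
      unfolding image_pair image_comp[symmetric] by fastforce
  next
    fix u v u' v'
    assume V': "u \<in> V'" "v \<in> V'" "u' \<in> V'" "v' \<in> V'"
      and "E' u v" "E' u' v'" "{u, v} \<noteq> {u', v'}"
    then have "E (h u) (h v)" "E (h u') (h v')" "{h u, h v} \<noteq> {h u', h v'}"
      "h u \<in> V" "h v \<in> V" "h u' \<in> V" "h v' \<in> V"
      using assms(3,4) image_pair_neq by auto
    with crossings have "path_image (g {h u, h v}) \<inter> path_image (g {h u', h v'})
        \<subseteq> f ` ({h u, h v} \<inter> {h u', h v'})"
      by blast
    then show "path_image (g (h ` {u, v})) \<inter> path_image (g (h ` {u', v'}))
        \<subseteq> (f \<circ> h) ` ({u, v} \<inter> {u', v'})"
      unfolding image_comp[symmetric] image_pair_Int[OF V'] image_pair .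
  qed
qed

lemma RDirProd_mult: "(a, b) \<otimes>\<^bsub>RDirProd R S\<^esub> (c, d) = (a \<otimes>\<^bsub>R\<^esub> c, b \<otimes>\<^bsub>S\<^esub> d)"
  by (simp add: RDirProd_def DirProd_def monoid.defs)

lemma RDirProd_add: "(a, b) \<oplus>\<^bsub>RDirProd R S\<^esub> (c, d) = (a \<oplus>\<^bsub>R\<^esub> c, b \<oplus>\<^bsub>S\<^esub> d)"
  by (simp add: RDirProd_def DirProd_def monoid.defs)

lemma coset_ideal_RDirProd:
  "coset_ideal (RDirProd R S) (I \<times> J) (x, y) = coset_ideal R I x \<times> coset_ideal S J y"
  unfolding coset_ideal_def by (auto simp: RDirProd_carrier RDirProd_mult RDirProd_add)

lemma (in ring) coset_ideal_zero:
  assumes "ideal J R"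
  shows "coset_ideal R J \<zero> = J"
proof -
  have "J \<subseteq> carrier R"
    using assms by (simp add: ideal.axioms(1) additive_subgroup.a_subset)
  then show ?thesis
    unfolding coset_ideal_def by force
qed

lemma (in ring) coset_ideal_self:
  assumes "ideal J R" and "x \<in> carrier R"
  shows "x \<in> coset_ideal R J x"
proof -
  have "x = x \<otimes> \<one> \<oplus> \<zero>" and "\<zero> \<in> J"
    using assms by (simp_all add: additive_subgroup.zero_closed ideal.axioms(1))
  then show ?thesis
    unfolding coset_ideal_def by blast
qed

lemma planar_gamma2_RDirProd_swap:
  assumes "planar (gamma2_verts (RDirProd R1 R2) (I1 \<times> I2)) (gamma2_adj (RDirProd R1 R2) (I1 \<times> I2))"
  shows "planar (gamma2_verts (RDirProd R2 R1) (I2 \<times> I1)) (gamma2_adj (RDirProd R2 R1) (I2 \<times> I1))"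
proof (rule planar_subgraph_embedding[OF assms, of prod.swap])
  have swap_verts: "prod.swap p \<in> gamma2_verts (RDirProd R1 R2) (I1 \<times> I2)"
    if "p \<in> gamma2_verts (RDirProd R2 R1) (I2 \<times> I1)" for p
    using that by (cases p) (auto simp: gamma2_verts_def RDirProd_carrier coset_ideal_RDirProd times_eq_iff)
  then show "prod.swap ` gamma2_verts (RDirProd R2 R1) (I2 \<times> I1) \<subseteq> gamma2_verts (RDirProd R1 R2) (I1 \<times> I2)"
    by blast
  show "gamma2_adj (RDirProd R1 R2) (I1 \<times> I2) (prod.swap p) (prod.swap q)"
    if "gamma2_adj (RDirProd R2 R1) (I2 \<times> I1) p q" for p q
    using that swap_verts by (cases p, cases q) (auto simp: gamma2_adj_def coset_ideal_RDirProd)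
qed (rule inj_swap)

lemma planar_gamma2_RDirProd_fst:
  assumes "ring R1" and "ring R2" and "ideal I1 R1" and "ideal I2 R2" and "I2 \<noteq> carrier R2"
    and "planar (gamma2_verts (RDirProd R1 R2) (I1 \<times> I2)) (gamma2_adj (RDirProd R1 R2) (I1 \<times> I2))"
  shows "planar (gamma2_verts R1 I1) (gamma2_adj R1 I1)"
proof (rule planar_subgraph_embedding[OF assms(6), of "\<lambda>x. (x, \<zero>\<^bsub>R2\<^esub>)"])
  have zero_I2: "\<zero>\<^bsub>R2\<^esub> \<in> I2"
    using assms(4) by (simp add: additive_subgroup.zero_closed ideal.axioms(1))
  have coset_pair: "coset_ideal (RDirProd R1 R2) (I1 \<times> I2) (x, \<zero>\<^bsub>R2\<^esub>) = coset_ideal R1 I1 x \<times> I2" for x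
    using ring.coset_ideal_zero[OF assms(2,4)] by (simp add: coset_ideal_RDirProd)
  have pair_verts: "(x, \<zero>\<^bsub>R2\<^esub>) \<in> gamma2_verts (RDirProd R1 R2) (I1 \<times> I2)"
    if "x \<in> gamma2_verts R1 I1" for x
  proof -
    have x: "x \<in> carrier R1" "x \<notin> I1"
      using that by (auto simp: gamma2_verts_def)
    then have "coset_ideal R1 I1 x \<noteq> {}"
      using ring.coset_ideal_self[OF assms(1,3)] by blast
    then have "coset_ideal R1 I1 x \<times> I2 \<noteq> carrier R1 \<times> carrier R2"
      using assms(5) zero_I2 by (auto simp: times_eq_iff)
    then show ?thesis
      using x ring.ring_simprules(2)[OF assms(2)] by (simp add: gamma2_verts_def RDirProd_carrier coset_pair)
  qed
  then show "(\<lambda>x. (x, \<zero>\<^bsub>R2\<^esub>)) ` gamma2_verts R1 I1 \<subseteq> gamma2_verts (RDirProd R1 R2) (I1 \<times> I2)"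
    by blast
  show "gamma2_adj (RDirProd R1 R2) (I1 \<times> I2) (x, \<zero>\<^bsub>R2\<^esub>) (y, \<zero>\<^bsub>R2\<^esub>)"
    if "gamma2_adj R1 I1 x y" for x y
    using that pair_verts by (auto simp: gamma2_adj_def coset_pair)
qed (simp add: inj_on_def)

theorem corollary2p4:
  fixes R1 :: "('a, 'm) ring_scheme" and R2 :: "('b, 'n) ring_scheme"
    and I1 :: "'a set" and I2 :: "'b set"
  assumes "cring R1" and "cring R2"
    and "\<one>\<^bsub>R1\<^esub> \<noteq> \<zero>\<^bsub>R1\<^esub>" and "\<one>\<^bsub>R2\<^esub> \<noteq> \<zero>\<^bsub>R2\<^esub>"
    and "ideal I1 R1" and "I1 \<noteq> carrier R1"
    and "ideal I2 R2" and "I2 \<noteq> carrier R2"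
    and "\<not> planar (gamma2_verts R1 I1) (gamma2_adj R1 I1) \<or>
         \<not> planar (gamma2_verts R2 I2) (gamma2_adj R2 I2)"
  shows "\<not> planar (gamma2_verts (RDirProd R1 R2) (I1 \<times> I2)) (gamma2_adj (RDirProd R1 R2) (I1 \<times> I2))"
proof
  assume planar_product: "planar (gamma2_verts (RDirProd R1 R2) (I1 \<times> I2)) (gamma2_adj (RDirProd R1 R2) (I1 \<times> I2))"
  have rings: "ring R1" "ring R2"
    using assms(1,2) by (simp_all add: cring.axioms(1))
  have "planar (gamma2_verts R1 I1) (gamma2_adj R1 I1)"
    using planar_gamma2_RDirProd_fst[OF rings assms(5,7,8) planar_product] .
  moreover have "planar (gamma2_verts R2 I2) (gamma2_adj R2 I2)"
    using planar_gamma2_RDirProd_fst[OF rings(2,1) assms(7,5,6) planar_gamma2_RDirProd_swap[OF planar_product]] .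
  ultimately show False
    using assms(9) by blast
qed

end
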